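(* Let $C$ and $D$ be centrally symmetric convex bodies in $\mathbb{R}^d$, let $\alpha>0$, and let $C_+:=C+\alpha D$. Then for every set $U\subseteq D^\circ$, $$\mathcal{N}_{(C_+)^\circ}(U,\alpha)\lesssim_d\mathcal{N}_{C^\circ}(U,\alpha).$$
   Context: Polar $X^\circ=\{y:\langle w,y\rangle\le1\ \forall w\in X\}$. For a convex body $E$ with $O\in\operatorname{int}E$, $U\subseteq\mathbb{R}^d$ and $\alpha>0$, $\mathcal{N}_E(U,\alpha)$ is the minimum number $m$ of translates $x_1+\alpha E,\dots,x_m+\alpha E$ ($x_i\in\mathbb{R}^d$) whose union contains $U$. $X\lesssim_d Y$ means $X\le c^dY$ for a constant $c\ge1$ independent of $d$, $C$, $D$, $\alpha$, $U$. *)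

theory Defs
  imports "HOL-Analysis.Analysis"
begin

text \<open>Since the implied constant must be independent of the dimension d, the dimension
  is quantified inside the statement.  We therefore model R^d concretely as the
  functions nat => real vanishing outside {..<d}, with the standard inner product.\<close>

type_synonym rvec = "nat \<Rightarrow> real"

definition Rsp :: "nat \<Rightarrow> rvec set" where
  "Rsp d = {x. \<forall>i\<ge>d. x i = 0}"

definition vadd :: "rvec \<Rightarrow> rvec \<Rightarrow> rvec" where
  "vadd x y = (\<lambda>i. x i + y i)"

definition vsmul :: "real \<Rightarrow> rvec \<Rightarrow> rvec" where
  "vsmul a x = (\<lambda>i. a * x i)"

definition ip :: "nat \<Rightarrow> rvec \<Rightarrow> rvec \<Rightarrow> real" where
  "ip d x y = (\<Sum>i<d. x i * y i)"

definition vnorm :: "nat \<Rightarrow> rvec \<Rightarrow> real" where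
  "vnorm d x = sqrt (ip d x x)"

definition vdist :: "nat \<Rightarrow> rvec \<Rightarrow> rvec \<Rightarrow> real" where
  "vdist d x y = vnorm d (\<lambda>i. x i - y i)"

definition vconvex :: "rvec set \<Rightarrow> bool" where
  "vconvex K \<longleftrightarrow> (\<forall>x\<in>K. \<forall>y\<in>K. \<forall>t::real. 0 \<le> t \<and> t \<le> 1 \<longrightarrow>
                     (\<lambda>i. (1 - t) * x i + t * y i) \<in> K)"

definition convex_body :: "nat \<Rightarrow> rvec set \<Rightarrow> bool" where
  "convex_body d K \<longleftrightarrow>
     K \<subseteq> Rsp d \<and> vconvex K \<and>
     (\<exists>M. \<forall>x\<in>K. vnorm d x \<le> M) \<and>
     (\<forall>x\<in>Rsp d. (\<forall>e>0. \<exists>y\<in>K. vdist d y x < e) \<longrightarrow> x \<in> K) \<and>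
     (\<exists>x\<in>Rsp d. \<exists>r>0. {y\<in>Rsp d. vdist d y x < r} \<subseteq> K)"

definition centrally_symmetric :: "rvec set \<Rightarrow> bool" where
  "centrally_symmetric K \<longleftrightarrow> (\<forall>x\<in>K. (\<lambda>i. - x i) \<in> K)"

definition polar :: "nat \<Rightarrow> rvec set \<Rightarrow> rvec set" where
  "polar d X = {y\<in>Rsp d. \<forall>w\<in>X. ip d w y \<le> 1}"

definition minksum :: "rvec set \<Rightarrow> rvec set \<Rightarrow> rvec set" where
  "minksum A B = {vadd a b | a b. a \<in> A \<and> b \<in> B}"

definition dil :: "real \<Rightarrow> rvec set \<Rightarrow> rvec set" where
  "dil a A = vsmul a ` A"

definition covnum :: "nat \<Rightarrow> rvec set \<Rightarrow> rvec set \<Rightarrow> real \<Rightarrow> nat" where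
  "covnum d E U \<alpha> = (LEAST m. \<exists>X. finite X \<and> card X = m \<and> X \<subseteq> Rsp d \<and>
        U \<subseteq> (\<Union>x\<in>X. (vadd x) ` dil \<alpha> E))"

end

theory Submission
  imports Defs
begin

(* Let E = C\<^sup>\<circ>, F = (C + \<alpha>D)\<^sup>\<circ> and K = \<alpha>E \<inter> D\<^sup>\<circ>.  For e \<in> E with \<alpha>e \<in> D\<^sup>\<circ>,
   \<langle>c + \<alpha>d, e/2\<rangle> = (\<langle>c, e\<rangle> + \<langle>d, \<alpha>e\<rangle>) / 2 \<le> 1, so K/2 \<subseteq> \<alpha>F.
   Take a cover of U by N translates x + \<alpha>E.  Since U \<subseteq> D\<^sup>\<circ> and both \<alpha>E and D\<^sup>\<circ> are convex
   and symmetric, each piece U \<inter> (x + \<alpha>E) lies in s + 2K for any of its points s.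
   A maximal subset of the piece whose differences avoid K/2 covers it by translates of K/2;
   the translates of K/4 around its points are disjoint and lie in s + (9/4)K, so comparing
   volumes there are at most 9^d of them.  Hence N_F(U, \<alpha>) \<le> 9^d N. *)

section \<open>Convex symmetric sets, dilations and cubes\<close>

lemma vconvexD:
  assumes "vconvex A" "u \<in> A" "v \<in> A" "0 \<le> t" "t \<le> 1"
  shows "(\<lambda>i. (1 - t) * u i + t * v i) \<in> A"
  using assms unfolding vconvex_def by blast

lemma centrally_symmetricD:
  assumes "centrally_symmetric A" "u \<in> A"
  shows "(\<lambda>i. - u i) \<in> A"
  using assms unfolding centrally_symmetric_def by blast

lemma half_difference_mem:
  assumes "vconvex A" "centrally_symmetric A" "u \<in> A" "v \<in> A"
  shows "(\<lambda>i. (u i - v i) / 2) \<in> A"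
proof -
  have "(\<lambda>i. (1 - 1/2) * u i + 1/2 * - v i) \<in> A"
    using assms by (intro vconvexD centrally_symmetricD) auto
  then show ?thesis by (simp add: field_simps)
qed

lemma zero_mem_symmetric_convex:
  assumes "vconvex A" "centrally_symmetric A" "A \<noteq> {}"
  shows "(\<lambda>i. 0) \<in> A"
  using half_difference_mem[OF assms(1,2)] assms(3) by fastforce

lemma vconvex_Int: "vconvex A \<Longrightarrow> vconvex B \<Longrightarrow> vconvex (A \<inter> B)"
  unfolding vconvex_def by blast

lemma centrally_symmetric_Int:
  "centrally_symmetric A \<Longrightarrow> centrally_symmetric B \<Longrightarrow> centrally_symmetric (A \<inter> B)"
  unfolding centrally_symmetric_def by blast

lemma vconvex_dil:
  assumes "vconvex A"
  shows "vconvex (dil r A)"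
  unfolding vconvex_def
proof (intro ballI allI impI)
  fix x y and t :: real
  assume "x \<in> dil r A" "y \<in> dil r A" and t: "0 \<le> t \<and> t \<le> 1"
  then obtain a b where ab: "a \<in> A" "b \<in> A" "x = vsmul r a" "y = vsmul r b"
    by (auto simp: dil_def)
  have "(\<lambda>i. (1 - t) * a i + t * b i) \<in> A"
    using assms ab t by (intro vconvexD) auto
  moreover have "(\<lambda>i. (1 - t) * x i + t * y i) = vsmul r (\<lambda>i. (1 - t) * a i + t * b i)"
    using ab by (simp add: vsmul_def fun_eq_iff algebra_simps)
  ultimately show "(\<lambda>i. (1 - t) * x i + t * y i) \<in> dil r A"
    by (simp add: dil_def)
qed

lemma centrally_symmetric_dil:
  assumes "centrally_symmetric A"
  shows "centrally_symmetric (dil r A)"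
  unfolding centrally_symmetric_def
proof
  fix x assume "x \<in> dil r A"
  then obtain a where a: "a \<in> A" "x = vsmul r a" by (auto simp: dil_def)
  then have "(\<lambda>i. - x i) = vsmul r (\<lambda>i. - a i)"
    by (simp add: vsmul_def fun_eq_iff)
  then show "(\<lambda>i. - x i) \<in> dil r A"
    using centrally_symmetricD[OF assms a(1)] by (simp add: dil_def)
qed

lemma dil_half_subset:
  assumes "vconvex A" "centrally_symmetric A"
  shows "dil (1/2) A \<subseteq> A"
proof
  fix y assume "y \<in> dil (1/2) A"
  then obtain x where x: "x \<in> A" "y = vsmul (1/2) x" by (auto simp: dil_def)
  then have "(\<lambda>i. (x i - 0) / 2) \<in> A"
    using assms zero_mem_symmetric_convex[OF assms] by (intro half_difference_mem) auto
  then show "y \<in> A" using x by (simp add: vsmul_def)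
qed

definition homothety :: "rvec \<Rightarrow> real \<Rightarrow> rvec \<Rightarrow> rvec" where
  "homothety p r x = (\<lambda>i. p i + r * x i)"

lemma homothety_image_subset_Rsp: "p \<in> Rsp d \<Longrightarrow> A \<subseteq> Rsp d \<Longrightarrow> homothety p r ` A \<subseteq> Rsp d"
  by (auto simp: homothety_def Rsp_def)

lemma dil_eq_homothety_image: "dil r A = homothety (\<lambda>i. 0) r ` A"
  by (simp add: dil_def vsmul_def homothety_def)

definition cube :: "nat \<Rightarrow> real \<Rightarrow> rvec set" where
  "cube d a = {x\<in>Rsp d. \<forall>i<d. \<bar>x i\<bar> \<le> a}"

lemma cube_mono: "a \<le> b \<Longrightarrow> cube d a \<subseteq> cube d b"
  by (auto simp: cube_def)

lemma cube_subset_dil: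
  assumes "r > 0" "cube d a \<subseteq> A"
  shows "cube d (r * a) \<subseteq> dil r A"
proof
  fix y assume "y \<in> cube d (r * a)"
  then have "(\<lambda>i. y i / r) \<in> cube d a"
    using assms(1) by (auto simp: cube_def Rsp_def field_simps abs_div)
  moreover have "y = vsmul r (\<lambda>i. y i / r)"
    using assms(1) by (simp add: vsmul_def)
  ultimately show "y \<in> dil r A" using assms(2) by (auto simp: dil_def)
qed

lemma dil_subset_cube:
  assumes "r > 0" "A \<subseteq> cube d a"
  shows "dil r A \<subseteq> cube d (r * a)"
  using assms by (auto simp: dil_def cube_def Rsp_def vsmul_def abs_mult intro: mult_left_mono)

section \<open>Volume in R^d\<close>

text \<open>Points of coord_measure d are extensional functions on {..<d}; zero_ext d identifies
  them with Rsp d.\<close>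

definition zero_ext :: "nat \<Rightarrow> (nat \<Rightarrow> real) \<Rightarrow> rvec" where
  "zero_ext d y = (\<lambda>i. if i < d then y i else 0)"

definition coord_measure :: "nat \<Rightarrow> (nat \<Rightarrow> real) measure" where
  "coord_measure d = PiM {..<d} (\<lambda>_. lborel)"

definition coords :: "nat \<Rightarrow> rvec set \<Rightarrow> (nat \<Rightarrow> real) set" where
  "coords d A = zero_ext d -` A \<inter> space (coord_measure d)"

definition vmeasurable :: "nat \<Rightarrow> rvec set \<Rightarrow> bool" where
  "vmeasurable d A \<longleftrightarrow> coords d A \<in> sets (coord_measure d)"

definition vol :: "nat \<Rightarrow> rvec set \<Rightarrow> ennreal" where
  "vol d A = emeasure (coord_measure d) (coords d A)"

interpretation lborel_product: product_sigma_finite "\<lambda>_::nat. lborel :: real measure"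
  by (simp add: product_sigma_finite_def sigma_finite_lborel)

lemma space_coord_measure: "space (coord_measure d) = PiE {..<d} (\<lambda>_. UNIV)"
  by (simp add: coord_measure_def space_PiM)

lemma emeasure_lborel_affine_preimage:
  fixes r p :: real
  assumes r: "r > 0" and B: "B \<in> sets borel"
  shows "emeasure lborel {t. (t - p) / r \<in> B} = ennreal r * emeasure lborel B"
proof -
  have meas: "{t. (t - p) / r \<in> B} \<in> sets borel"
    using measurable_sets[of "\<lambda>t::real. (t - p) / r" borel borel B] B by (simp add: vimage_def)
  have "emeasure lborel {t. (t - p) / r \<in> B}
      = emeasure (density (distr lborel borel (\<lambda>x. p + r * x)) (\<lambda>_. ennreal r)) {t. (t - p) / r \<in> B}"
    using lborel_real_affine[of r p] r by simp
  also have "\<dots> = ennreal r * emeasure (distr lborel borel (\<lambda>x. p + r * x)) {t. (t - p) / r \<in> B}"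
    using meas r by (subst emeasure_density_const) auto
  also have "emeasure (distr lborel borel (\<lambda>x. p + r * x)) {t. (t - p) / r \<in> B} = emeasure lborel B"
    using meas r by (subst emeasure_distr) (auto simp: vimage_def)
  finally show ?thesis .
qed

lemma emeasure_coord_measure_affine_preimage:
  fixes d :: nat and p :: rvec and r :: real
  assumes r: "r > 0"
  defines "h \<equiv> \<lambda>y. \<lambda>i\<in>{..<d}. (y i - p i) / r"
  shows "h \<in> coord_measure d \<rightarrow>\<^sub>M coord_measure d"
    and "X \<in> sets (coord_measure d) \<Longrightarrow>
      emeasure (coord_measure d) (h -` X \<inter> space (coord_measure d)) = ennreal (r ^ d) * emeasure (coord_measure d) X"
proof -
  show h: "h \<in> coord_measure d \<rightarrow>\<^sub>M coord_measure d"
    unfolding h_def coord_measure_def by measurable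
  define Q where "Q = density (distr (coord_measure d) (coord_measure d) h) (\<lambda>_. ennreal (1 / r ^ d))"
  have Q_eq: "Q = coord_measure d"
    unfolding coord_measure_def
  proof (rule lborel_product.PiM_eqI)
    show "sets Q = sets (PiM {..<d} (\<lambda>_. lborel))" by (simp add: Q_def coord_measure_def)
    fix A :: "nat \<Rightarrow> real set" assume A: "\<And>i. i \<in> {..<d} \<Longrightarrow> A i \<in> sets lborel"
    then have box: "Pi\<^sub>E {..<d} A \<in> sets (coord_measure d)"
      unfolding coord_measure_def by (intro sets_PiM_I_finite) auto
    have preimage: "h -` Pi\<^sub>E {..<d} A \<inter> space (coord_measure d) = Pi\<^sub>E {..<d} (\<lambda>i. {t. (t - p i) / r \<in> A i})"
      unfolding h_def space_coord_measure by (auto simp: PiE_def Pi_def extensional_def)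
    have A': "{t. (t - p i) / r \<in> A i} \<in> sets lborel" if "i < d" for i
      using measurable_sets[of "\<lambda>t::real. (t - p i) / r" borel borel "A i"] A that
      by (simp add: vimage_def)
    have "emeasure Q (Pi\<^sub>E {..<d} A)
        = ennreal (1 / r ^ d) * emeasure (coord_measure d) (h -` Pi\<^sub>E {..<d} A \<inter> space (coord_measure d))"
      unfolding Q_def using box h by (simp add: emeasure_density_const emeasure_distr)
    also have "\<dots> = ennreal (1 / r ^ d) * (\<Prod>i<d. emeasure lborel {t. (t - p i) / r \<in> A i})"
      unfolding preimage unfolding coord_measure_def using A' by (subst lborel_product.emeasure_PiM) auto
    also have "\<dots> = ennreal (1 / r ^ d) * (ennreal r ^ d * (\<Prod>i<d. emeasure lborel (A i)))"
      using A r by (simp add: emeasure_lborel_affine_preimage prod.distrib)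
    also have "\<dots> = (\<Prod>i<d. emeasure lborel (A i))"
      using r by (simp add: ennreal_power ennreal_mult[symmetric] mult.assoc[symmetric])
    finally show "emeasure Q (Pi\<^sub>E {..<d} A) = (\<Prod>i\<in>{..<d}. emeasure lborel (A i))" by simp
  qed simp
  assume X: "X \<in> sets (coord_measure d)"
  have "emeasure (coord_measure d) X = ennreal (1 / r ^ d) * emeasure (coord_measure d) (h -` X \<inter> space (coord_measure d))"
    using X h by (subst Q_eq[symmetric]) (simp add: Q_def emeasure_density_const emeasure_distr)
  then show "emeasure (coord_measure d) (h -` X \<inter> space (coord_measure d)) = ennreal (r ^ d) * emeasure (coord_measure d) X"
    using r by (simp add: ennreal_mult[symmetric] mult.assoc[symmetric])
qed

lemma coords_homothety_image:
  assumes r: "r > 0" and "p \<in> Rsp d" "A \<subseteq> Rsp d"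
  shows "coords d (homothety p r ` A)
    = (\<lambda>y. \<lambda>i\<in>{..<d}. (y i - p i) / r) -` coords d A \<inter> space (coord_measure d)"
proof -
  have "zero_ext d y = homothety p r a \<longleftrightarrow> a = zero_ext d (\<lambda>i\<in>{..<d}. (y i - p i) / r)"
    if "a \<in> A" for a y
  proof -
    have "zero_ext d y i = homothety p r a i \<longleftrightarrow> a i = zero_ext d (\<lambda>i\<in>{..<d}. (y i - p i) / r) i" for i
      using that assms by (cases "i < d") (auto simp: zero_ext_def homothety_def Rsp_def subset_iff field_simps)
    then show ?thesis by (simp add: fun_eq_iff)
  qed
  then show ?thesis
    by (auto simp: coords_def space_coord_measure)
qed

lemma
  assumes "r > 0" "p \<in> Rsp d" "A \<subseteq> Rsp d" "vmeasurable d A"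
  shows vmeasurable_homothety_image: "vmeasurable d (homothety p r ` A)"
    and vol_homothety_image: "vol d (homothety p r ` A) = ennreal (r ^ d) * vol d A"
  using emeasure_coord_measure_affine_preimage[OF assms(1), where d=d and p=p] assms
  by (simp_all add: vmeasurable_def vol_def coords_homothety_image measurable_sets)

lemma measurable_zero_ext: "zero_ext d \<in> borel_measurable (coord_measure d)"
proof (rule measurable_coordinatewise_then_product)
  fix i
  show "(\<lambda>x. zero_ext d x i) \<in> borel_measurable (coord_measure d)"
    by (cases "i < d") (simp_all add: zero_ext_def coord_measure_def)
qed

lemma vmeasurable_closed: "closed A \<Longrightarrow> vmeasurable d A"
  unfolding vmeasurable_def coords_def using measurable_zero_ext borel_closed by (rule measurable_sets)

lemma coords_Int: "coords d (A \<inter> B) = coords d A \<inter> coords d B"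
  by (auto simp: coords_def)

lemma vmeasurable_Int: "vmeasurable d A \<Longrightarrow> vmeasurable d B \<Longrightarrow> vmeasurable d (A \<inter> B)"
  unfolding vmeasurable_def coords_Int by (rule sets.Int)

lemma coords_cube: "coords d (cube d a) = PiE {..<d} (\<lambda>_. {-a..a})"
  by (auto simp: coords_def space_coord_measure zero_ext_def cube_def Rsp_def PiE_def
      extensional_def Pi_iff abs_le_iff minus_le_iff)

lemma
  assumes "a \<ge> 0"
  shows vmeasurable_cube: "vmeasurable d (cube d a)"
    and vol_cube: "vol d (cube d a) = ennreal ((2 * a) ^ d)"
  using assms
  by (simp_all add: vmeasurable_def vol_def coords_cube coord_measure_def sets_PiM_I_finite
      lborel_product.emeasure_PiM ennreal_power)

lemma vol_mono: "vmeasurable d B \<Longrightarrow> A \<subseteq> B \<Longrightarrow> vol d A \<le> vol d B"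
  unfolding vol_def vmeasurable_def by (rule emeasure_mono) (auto simp: coords_def)

section \<open>Covering by translates of a symmetric solid\<close>

definition symmetric_solid :: "nat \<Rightarrow> rvec set \<Rightarrow> bool" where
  "symmetric_solid d L \<longleftrightarrow> vconvex L \<and> centrally_symmetric L \<and> vmeasurable d L \<and>
     (\<exists>a>0. cube d a \<subseteq> L) \<and> (\<exists>b. L \<subseteq> cube d b)"

lemma symmetric_solid_subset_Rsp: "symmetric_solid d L \<Longrightarrow> L \<subseteq> Rsp d"
  by (auto simp: symmetric_solid_def cube_def)

lemma symmetric_solid_zero_mem: "symmetric_solid d L \<Longrightarrow> (\<lambda>i. 0) \<in> L"
  by (auto simp: symmetric_solid_def cube_def Rsp_def)

lemma
  assumes "symmetric_solid d L"
  shows vol_symmetric_solid_pos: "0 < vol d L"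
    and vol_symmetric_solid_finite: "vol d L < \<infinity>"
proof -
  obtain a b where a: "a > 0" "cube d a \<subseteq> L" and b: "L \<subseteq> cube d b" and L: "vmeasurable d L"
    using assms by (auto simp: symmetric_solid_def)
  have "0 < ennreal ((2 * a) ^ d)"
    using a by simp
  also have "\<dots> \<le> vol d L"
    using vol_mono[OF L a(2)] vol_cube[of a d] a by simp
  finally show "0 < vol d L" .
  have "L \<subseteq> cube d (max b 0)"
    using b cube_mono[of b "max b 0" d] by simp
  then have "vol d L \<le> ennreal ((2 * max b 0) ^ d)"
    using vol_mono[OF vmeasurable_cube] vol_cube by (metis max.cobounded2)
  then show "vol d L < \<infinity>"
    using order.strict_trans1 by fastforce
qed

lemma symmetric_solid_dil:
  assumes L: "symmetric_solid d L" and r: "r > 0"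
  shows "symmetric_solid d (dil r L)"
proof -
  obtain a b where a: "a > 0" "cube d a \<subseteq> L" and b: "L \<subseteq> cube d b"
    using L by (auto simp: symmetric_solid_def)
  have "vmeasurable d (dil r L)"
    unfolding dil_eq_homothety_image using L r symmetric_solid_subset_Rsp[OF L]
    by (intro vmeasurable_homothety_image) (auto simp: symmetric_solid_def Rsp_def)
  moreover have "cube d (r * a) \<subseteq> dil r L" "dil r L \<subseteq> cube d (r * b)"
    using cube_subset_dil[OF r a(2)] dil_subset_cube[OF r b] .
  moreover have "r * a > 0"
    using r a by simp
  ultimately show ?thesis
    using L unfolding symmetric_solid_def by (blast intro: vconvex_dil centrally_symmetric_dil)
qed

lemma cube_subset_homothety_image:
  assumes "symmetric_solid d L"
  obtains R where "R > 0" "cube d b \<subseteq> homothety (\<lambda>i. 0) R ` L"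
proof -
  obtain a where a: "a > 0" "cube d a \<subseteq> L"
    using assms by (auto simp: symmetric_solid_def)
  define R where "R = (\<bar>b\<bar> + 1) / a"
  have R: "R > 0" "b \<le> R * a"
    using a(1) by (auto simp: R_def)
  have "cube d b \<subseteq> dil R L"
    using cube_mono[OF R(2)] cube_subset_dil[OF R(1) a(2)] by blast
  then show ?thesis
    using R that by (simp add: dil_eq_homothety_image)
qed

definition separated :: "rvec set \<Rightarrow> rvec set \<Rightarrow> bool" where
  "separated L P \<longleftrightarrow> (\<forall>p\<in>P. \<forall>q\<in>P. p \<noteq> q \<longrightarrow> (\<lambda>i. p i - q i) \<notin> L)"

lemma disjoint_half_translates:
  assumes "vconvex L" "centrally_symmetric L" "separated L P"
  shows "disjoint_family_on (\<lambda>p. homothety p (1/2) ` L) P"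
  unfolding disjoint_family_on_def
proof (intro ballI impI equals0I)
  fix p q x assume pq: "p \<in> P" "q \<in> P" "p \<noteq> q"
    and "x \<in> homothety p (1/2) ` L \<inter> homothety q (1/2) ` L"
  then obtain a b where ab: "a \<in> L" "b \<in> L" "x = homothety p (1/2) a" "x = homothety q (1/2) b"
    by auto
  then have halves: "p i + 1/2 * a i = q i + 1/2 * b i" for i
    by (metis homothety_def)
  have "(\<lambda>i. p i - q i) = (\<lambda>i. (b i - a i) / 2)"
  proof
    show "p i - q i = (b i - a i) / 2" for i
      using halves[of i] by (simp add: field_simps)
  qed
  then have "(\<lambda>i. p i - q i) \<in> L"
    using half_difference_mem[OF assms(1,2) ab(2,1)] by simp
  then show False
    using assms(3) pq by (auto simp: separated_def)
qed

lemma half_translate_subset: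
  assumes L: "vconvex L" and R: "R > 0" and p: "p \<in> homothety k R ` L"
  shows "homothety p (1/2) ` L \<subseteq> homothety k (R + 1/2) ` L"
proof
  fix x assume "x \<in> homothety p (1/2) ` L"
  then obtain a where a: "a \<in> L" "x = homothety p (1/2) a" by auto
  obtain c where c: "c \<in> L" "p = homothety k R c" using p by auto
  define t where "t = 1 / (2 * R + 1)"
  have t: "0 \<le> t" "t \<le> 1" "(R + 1/2) * (1 - t) = R" "(R + 1/2) * t = 1/2"
    using R by (auto simp: t_def field_simps)
  have "(\<lambda>i. (1 - t) * c i + t * a i) \<in> L"
    using L a c t by (intro vconvexD) auto
  moreover have "x = homothety k (R + 1/2) (\<lambda>i. (1 - t) * c i + t * a i)"
    using t(3,4) by (simp add: a c homothety_def fun_eq_iff distrib_left mult.assoc[symmetric])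
  ultimately show "x \<in> homothety k (R + 1/2) ` L" by blast
qed

text \<open>The sets p + L/2 for p in P are disjoint and lie in k + (R + 1/2) L; compare volumes.\<close>

lemma card_separated_le:
  assumes L: "symmetric_solid d L" and R: "R > 0" "k \<in> Rsp d" "S \<subseteq> homothety k R ` L"
    and P: "finite P" "P \<subseteq> S" "separated L P"
  shows "real (card P) \<le> (2 * R + 1) ^ d"
proof -
  define B where "B p = homothety p (1/2) ` L" for p
  have LR: "L \<subseteq> Rsp d" and Lm: "vmeasurable d L" and Lc: "vconvex L" "centrally_symmetric L"
    using L symmetric_solid_subset_Rsp by (auto simp: symmetric_solid_def)
  have PR: "P \<subseteq> Rsp d"
    using P R homothety_image_subset_Rsp[OF R(2) LR] by blast
  have B: "vmeasurable d (B p)" "vol d (B p) = ennreal ((1/2) ^ d) * vol d L" if "p \<in> P" for p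
    using that PR LR Lm unfolding B_def
    by (auto intro!: vmeasurable_homothety_image vol_homothety_image)
  have disj: "disjoint_family_on (\<lambda>p. coords d (B p)) P"
    using disjoint_half_translates[OF Lc P(3)]
    by (auto simp: disjoint_family_on_def B_def coords_Int[symmetric] coords_def)
  have "(\<Sum>p\<in>P. vol d (B p)) = emeasure (coord_measure d) (\<Union>p\<in>P. coords d (B p))"
    unfolding vol_def using disj P(1) B(1) by (intro sum_emeasure) (auto simp: vmeasurable_def)
  also have "\<dots> \<le> vol d (homothety k (R + 1/2) ` L)"
  proof -
    have "(\<Union>p\<in>P. B p) \<subseteq> homothety k (R + 1/2) ` L"
      using half_translate_subset[OF Lc(1) R(1)] P(2) R(3) unfolding B_def by blast
    moreover have "vmeasurable d (homothety k (R + 1/2) ` L)"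
      using R LR Lm by (intro vmeasurable_homothety_image) auto
    ultimately show ?thesis
      unfolding vol_def vmeasurable_def by (intro emeasure_mono) (auto simp: coords_def)
  qed
  also have "\<dots> = ennreal ((R + 1/2) ^ d) * vol d L"
    using R LR Lm by (intro vol_homothety_image) auto
  finally have "(\<Sum>p\<in>P. ennreal ((1/2) ^ d) * vol d L) \<le> ennreal ((R + 1/2) ^ d) * vol d L"
    using B(2) by simp
  moreover obtain v where v: "vol d L = ennreal v" "v > 0"
    using vol_symmetric_solid_pos[OF L] vol_symmetric_solid_finite[OF L]
    by (cases "vol d L") (auto simp: ennreal_less_zero_iff)
  ultimately have "real (card P) * (1/2) ^ d * v \<le> (R + 1/2) ^ d * v"
    using R(1) by (simp add: ennreal_mult[symmetric] ennreal_of_nat_eq_real_of_nat ennreal_le_iff mult.assoc)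
  then have "real (card P) * (1/2) ^ d \<le> (2 * R + 1) ^ d * (1/2) ^ d"
    using v(2) by (simp add: power_mult_distrib[symmetric] field_simps)
  then show ?thesis by simp
qed

lemma separated_insert:
  assumes "centrally_symmetric L" "separated L P" "s \<notin> (\<Union>p\<in>P. vadd p ` L)"
  shows "separated L (insert s P)"
proof -
  have from_s: "(\<lambda>i. s i - p i) \<notin> L" if "p \<in> P" for p
  proof
    assume "(\<lambda>i. s i - p i) \<in> L"
    then have "s \<in> vadd p ` L"
      by (rule image_eqI[rotated]) (simp add: vadd_def)
    then show False using assms(3) that by blast
  qed
  have to_s: "(\<lambda>i. p i - s i) \<notin> L" if "p \<in> P" for p
  proof
    assume "(\<lambda>i. p i - s i) \<in> L"
    from centrally_symmetricD[OF assms(1) this] have "(\<lambda>i. s i - p i) \<in> L" by simp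
    with from_s that show False by blast
  qed
  show ?thesis
    using assms(2) from_s to_s unfolding separated_def by blast
qed

text \<open>A separated subset of S of maximal cardinality covers S.\<close>

lemma cover_by_translates:
  assumes L: "symmetric_solid d L" and R: "R > 0" "k \<in> Rsp d" "S \<subseteq> homothety k R ` L"
  obtains Y where "finite Y" "Y \<subseteq> S" "real (card Y) \<le> (2 * R + 1) ^ d" "S \<subseteq> (\<Union>y\<in>Y. vadd y ` L)"
proof -
  define packing where "packing P \<longleftrightarrow> finite P \<and> P \<subseteq> S \<and> separated L P" for P
  have "card P < nat \<lfloor>(2 * R + 1) ^ d\<rfloor> + 1" if "packing P" for P
    using card_separated_le[OF L R] that unfolding packing_def by (simp add: le_nat_floor less_Suc_eq_le)
  moreover have "packing {}"
    by (simp add: packing_def separated_def)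
  ultimately obtain P where P: "packing P" and max: "\<And>Q. packing Q \<Longrightarrow> card Q \<le> card P"
    using Lattices_Big.ex_has_greatest_nat[of packing "{}" card] by blast
  have "S \<subseteq> (\<Union>p\<in>P. vadd p ` L)"
  proof
    fix s assume s: "s \<in> S"
    show "s \<in> (\<Union>p\<in>P. vadd p ` L)"
    proof (rule ccontr)
      assume uncovered: "s \<notin> (\<Union>p\<in>P. vadd p ` L)"
      have "s \<in> vadd s ` L"
        using symmetric_solid_zero_mem[OF L] by (rule image_eqI[rotated]) (simp add: vadd_def)
      then have "s \<notin> P"
        using uncovered by blast
      moreover have "packing (insert s P)"
        using P s separated_insert[OF _ _ uncovered] L
        unfolding packing_def symmetric_solid_def by blast
      ultimately show False
        using max[of "insert s P"] P unfolding packing_def by simp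
    qed
  qed
  moreover have "real (card P) \<le> (2 * R + 1) ^ d"
    using P card_separated_le[OF L R] unfolding packing_def by blast
  ultimately show ?thesis
    using P that unfolding packing_def by blast
qed

lemma piece_subset_homothety_image:
  assumes A: "vconvex A" "centrally_symmetric A" and B: "vconvex B" "centrally_symmetric B"
    and S: "S \<subseteq> B \<inter> vadd x ` A" "s \<in> S"
  shows "S \<subseteq> homothety s 4 ` dil (1/2) (A \<inter> B)"
proof
  fix t assume "t \<in> S"
  then obtain a a' where a: "a \<in> A" "t = vadd x a" and a': "a' \<in> A" "s = vadd x a'"
    and B_mem: "t \<in> B" "s \<in> B"
    using S by blast
  have "(\<lambda>i. (t i - s i) / 2) = (\<lambda>i. (a i - a' i) / 2)"
    by (simp add: a a' vadd_def)
  then have "(\<lambda>i. (t i - s i) / 2) \<in> A \<inter> B"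
    using half_difference_mem[OF A a(1) a'(1)] half_difference_mem[OF B B_mem] by simp
  moreover have "t = homothety s 4 (vsmul (1/2) (\<lambda>i. (t i - s i) / 2))"
    by (simp add: homothety_def vsmul_def fun_eq_iff field_simps)
  ultimately show "t \<in> homothety s 4 ` dil (1/2) (A \<inter> B)"
    by (auto simp: dil_def)
qed

lemma cover_symmetric_piece:
  assumes A: "vconvex A" "centrally_symmetric A" and B: "vconvex B" "centrally_symmetric B"
    and L: "symmetric_solid d (dil (1/2) (A \<inter> B))" and BR: "B \<subseteq> Rsp d"
  obtains Y where "finite Y" "Y \<subseteq> Rsp d" "real (card Y) \<le> 9 ^ d"
    "B \<inter> vadd x ` A \<subseteq> (\<Union>y\<in>Y. vadd y ` dil (1/2) (A \<inter> B))"
proof (cases "B \<inter> vadd x ` A = {}")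
  case True
  then show ?thesis
    using that[of "{}"] by simp
next
  case False
  then obtain s where s: "s \<in> B \<inter> vadd x ` A"
    by blast
  have piece: "B \<inter> vadd x ` A \<subseteq> homothety s 4 ` dil (1/2) (A \<inter> B)"
    using piece_subset_homothety_image[OF A B subset_refl s] .
  have s_Rsp: "s \<in> Rsp d"
    using s BR by blast
  obtain Y where Y: "finite Y" "Y \<subseteq> B \<inter> vadd x ` A" "real (card Y) \<le> (2 * 4 + 1) ^ d"
    "B \<inter> vadd x ` A \<subseteq> (\<Union>y\<in>Y. vadd y ` dil (1/2) (A \<inter> B))"
    using cover_by_translates[OF L zero_less_numeral s_Rsp piece] .
  show ?thesis
  proof (rule that[OF Y(1) _ _ Y(4)])
    show "Y \<subseteq> Rsp d"
      using Y(2) BR by blast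
    show "real (card Y) \<le> 9 ^ d"
      using Y(3) by simp
  qed
qed

section \<open>Polars\<close>

lemma polar_subset_Rsp: "polar d X \<subseteq> Rsp d"
  by (auto simp: polar_def)

lemma ip_linear_right: "ip d w (\<lambda>i. a * x i + b * y i) = a * ip d w x + b * ip d w y"
  by (simp add: ip_def sum_distrib_left sum.distrib algebra_simps)

lemma vconvex_polar: "vconvex (polar d X)"
  unfolding vconvex_def
proof (intro ballI allI impI)
  fix x y and t :: real
  assume x: "x \<in> polar d X" and y: "y \<in> polar d X" and t: "0 \<le> t \<and> t \<le> 1"
  have "ip d w (\<lambda>i. (1 - t) * x i + t * y i) \<le> 1" if "w \<in> X" for w
  proof -
    have "ip d w x \<le> 1" "ip d w y \<le> 1"
      using x y that by (auto simp: polar_def)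
    then have "(1 - t) * ip d w x + t * ip d w y \<le> (1 - t) * 1 + t * 1"
      using t by (intro add_mono mult_left_mono) auto
    then show ?thesis by (simp add: ip_linear_right)
  qed
  moreover have "(\<lambda>i. (1 - t) * x i + t * y i) \<in> Rsp d"
    using x y by (auto simp: polar_def Rsp_def)
  ultimately show "(\<lambda>i. (1 - t) * x i + t * y i) \<in> polar d X"
    by (simp add: polar_def)
qed

lemma centrally_symmetric_polar:
  assumes "centrally_symmetric X"
  shows "centrally_symmetric (polar d X)"
  unfolding centrally_symmetric_def
proof
  fix y assume y: "y \<in> polar d X"
  have "ip d w (\<lambda>i. - y i) = ip d (\<lambda>i. - w i) y" for w
    by (simp add: ip_def)
  then have "ip d w (\<lambda>i. - y i) \<le> 1" if "w \<in> X" for w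
    using y centrally_symmetricD[OF assms that] by (simp add: polar_def)
  then show "(\<lambda>i. - y i) \<in> polar d X"
    using y by (auto simp: polar_def Rsp_def)
qed

lemma closed_polar: "closed (polar d X)"
proof -
  have "polar d X = (\<Inter>i\<in>{i. i \<ge> d}. {y. y i = 0}) \<inter> (\<Inter>w\<in>X. {y. ip d w y \<le> 1})"
    by (auto simp: polar_def Rsp_def)
  moreover have "closed {y::rvec. y i = 0}" for i
    by (intro closed_Collect_eq continuous_intros continuous_on_product_coordinates)
  moreover have "closed {y. ip d w y \<le> 1}" for w
    unfolding ip_def by (intro closed_Collect_le continuous_intros continuous_on_product_coordinates)
  ultimately show ?thesis by (metis closed_Int closed_INT)
qed

lemma abs_coord_le_vnorm:
  assumes "i < d"
  shows "\<bar>w i\<bar> \<le> vnorm d w"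
proof -
  have "(\<Sum>j\<in>{i}. w j * w j) \<le> (\<Sum>j<d. w j * w j)"
    using assms by (intro sum_mono2) auto
  then have "sqrt ((w i)\<^sup>2) \<le> sqrt (\<Sum>j<d. w j * w j)"
    by (intro real_sqrt_le_mono) (simp add: power2_eq_square)
  then show ?thesis by (simp add: vnorm_def ip_def)
qed

lemma cube_subset_polar:
  assumes M: "\<forall>w\<in>X. vnorm d w \<le> M"
  obtains a where "a > 0" "cube d a \<subseteq> polar d X"
proof
  define M' where "M' = max M 0"
  show a: "1 / (real d * M' + 1) > 0"
    by (simp add: M'_def add_nonneg_pos)
  show "cube d (1 / (real d * M' + 1)) \<subseteq> polar d X"
  proof
    fix y assume y: "y \<in> cube d (1 / (real d * M' + 1))"
    have "ip d w y \<le> 1" if w: "w \<in> X" for w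
    proof -
      have "w i * y i \<le> M' * (1 / (real d * M' + 1))" if "i < d" for i
      proof -
        have "\<bar>w i\<bar> \<le> M'"
          using abs_coord_le_vnorm[OF that, of w] M w by (force simp: M'_def)
        moreover have "\<bar>y i\<bar> \<le> 1 / (real d * M' + 1)"
          using y that by (simp add: cube_def)
        ultimately have "\<bar>w i\<bar> * \<bar>y i\<bar> \<le> M' * (1 / (real d * M' + 1))"
          by (intro mult_mono) (auto simp: M'_def)
        then show ?thesis by (metis abs_ge_self abs_mult order_trans)
      qed
      then have "ip d w y \<le> real d * M' * (1 / (real d * M' + 1))"
        unfolding ip_def using sum_mono[of "{..<d}" "\<lambda>i. w i * y i" "\<lambda>_. M' * (1 / (real d * M' + 1))"]
        by simp
      also have "\<dots> \<le> 1"
        using a by (simp add: divide_le_eq_1)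
      finally show ?thesis .
    qed
    then show "y \<in> polar d X"
      using y by (auto simp: polar_def cube_def)
  qed
qed

definition axis_vec :: "nat \<Rightarrow> real \<Rightarrow> rvec" where
  "axis_vec i c = (\<lambda>j. if j = i then c else 0)"

lemma ip_axis_vec:
  assumes "i < d"
  shows "ip d (axis_vec i c) y = c * y i"
proof -
  have "(\<Sum>j<d. axis_vec i c j * y j) = (\<Sum>j<d. if j = i then c * y i else 0)"
    by (intro sum.cong) (auto simp: axis_vec_def)
  then show ?thesis using assms by (simp add: ip_def)
qed

lemma vdist_add_axis_vec:
  assumes "i < d"
  shows "vdist d (\<lambda>j. x j + axis_vec i c j) x = \<bar>c\<bar>"
proof -
  have "(\<Sum>j<d. (x j + axis_vec i c j - x j) * (x j + axis_vec i c j - x j))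
      = (\<Sum>j<d. if j = i then c * c else 0)"
    by (intro sum.cong) (auto simp: axis_vec_def)
  then show ?thesis using assms by (simp add: vdist_def vnorm_def ip_def)
qed

lemma polar_subset_cube_axis:
  assumes r: "r > 0" and X: "\<forall>i<d. axis_vec i r \<in> X \<and> axis_vec i (-r) \<in> X"
  shows "polar d X \<subseteq> cube d (1 / r)"
proof
  fix y assume y: "y \<in> polar d X"
  have "\<bar>y i\<bar> \<le> 1 / r" if i: "i < d" for i
  proof -
    have "ip d (axis_vec i r) y \<le> 1" "ip d (axis_vec i (-r)) y \<le> 1"
      using y X i by (auto simp: polar_def)
    then have "r * y i \<le> 1" "- r * y i \<le> 1"
      using i by (auto simp: ip_axis_vec)
    then have "r * \<bar>y i\<bar> \<le> 1" by (auto simp: abs_if)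
    then show ?thesis using r by (simp add: field_simps)
  qed
  then show "y \<in> cube d (1 / r)"
    using y by (auto simp: polar_def cube_def)
qed

lemma convex_body_axis_points:
  assumes D: "convex_body d D" and sym: "centrally_symmetric D"
  obtains r where "r > 0" "\<forall>i<d. axis_vec i r \<in> D \<and> axis_vec i (-r) \<in> D"
proof -
  obtain x r where x: "x \<in> Rsp d" and r: "r > 0" and ball: "{y\<in>Rsp d. vdist d y x < r} \<subseteq> D"
    using D unfolding convex_body_def by blast
  have near_x: "(\<lambda>j. x j + axis_vec i c j) \<in> D" if "i < d" "\<bar>c\<bar> < r" for i c
    using ball vdist_add_axis_vec[OF that(1), of x c] that x by (auto simp: Rsp_def axis_vec_def)
  have "axis_vec i c \<in> D" if "i < d" "\<bar>c\<bar> < r" for i c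
  proof -
    have "(\<lambda>j. ((x j + axis_vec i c j) - (x j + axis_vec i (-c) j)) / 2) \<in> D"
      using D sym near_x that unfolding convex_body_def by (intro half_difference_mem) auto
    moreover have "(\<lambda>j. ((x j + axis_vec i c j) - (x j + axis_vec i (-c) j)) / 2) = axis_vec i c"
      by (auto simp: axis_vec_def fun_eq_iff)
    ultimately show ?thesis by simp
  qed
  then show ?thesis
    using r that[of "r / 2"] by auto
qed

lemma polar_bounded:
  assumes "convex_body d D" "centrally_symmetric D"
  obtains b where "polar d D \<subseteq> cube d b"
  using convex_body_axis_points[OF assms] polar_subset_cube_axis by metis

lemma half_polar_section_subset:
  "dil (1/2) (dil \<alpha> (polar d C) \<inter> polar d D) \<subseteq> dil \<alpha> (polar d (minksum C (dil \<alpha> D)))"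
proof
  fix y assume "y \<in> dil (1/2) (dil \<alpha> (polar d C) \<inter> polar d D)"
  then obtain e where e: "e \<in> polar d C" "vsmul \<alpha> e \<in> polar d D" "y = vsmul (1/2) (vsmul \<alpha> e)"
    by (auto simp: dil_def)
  have "ip d w (vsmul (1/2) e) \<le> 1" if w: "w \<in> minksum C (dil \<alpha> D)" for w
  proof -
    obtain c v where cv: "c \<in> C" "v \<in> D" "w = vadd c (vsmul \<alpha> v)"
      using w unfolding minksum_def dil_def by blast
    have "ip d w (vsmul (1/2) e) = 1/2 * ip d c e + 1/2 * ip d v (vsmul \<alpha> e)"
      by (simp add: cv ip_def vadd_def vsmul_def sum_distrib_left sum.distrib[symmetric] algebra_simps)
    also have "\<dots> \<le> 1/2 * 1 + 1/2 * 1"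
      using e cv by (intro add_mono mult_left_mono) (auto simp: polar_def)
    finally show ?thesis by simp
  qed
  moreover have "vsmul (1/2) e \<in> Rsp d"
    using e by (auto simp: polar_def Rsp_def vsmul_def)
  moreover have "y = vsmul \<alpha> (vsmul (1/2) e)"
    using e by (simp add: vsmul_def fun_eq_iff)
  ultimately show "y \<in> dil \<alpha> (polar d (minksum C (dil \<alpha> D)))"
    by (auto simp: dil_def polar_def)
qed

lemma symmetric_solid_polar_section:
  assumes C: "convex_body d C" "centrally_symmetric C"
    and D: "convex_body d D" "centrally_symmetric D" and \<alpha>: "\<alpha> > 0"
  shows "symmetric_solid d (dil \<alpha> (polar d C) \<inter> polar d D)"
proof -
  obtain MC MD where "\<forall>w\<in>C. vnorm d w \<le> MC" "\<forall>w\<in>D. vnorm d w \<le> MD"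
    using C D by (auto simp: convex_body_def)
  then obtain aC aD where aC: "aC > 0" "cube d aC \<subseteq> polar d C" and aD: "aD > 0" "cube d aD \<subseteq> polar d D"
    by (metis cube_subset_polar)
  let ?K = "dil \<alpha> (polar d C) \<inter> polar d D"
  have "cube d (min (\<alpha> * aC) aD) \<subseteq> ?K"
    using cube_mono[OF min.cobounded1] cube_mono[OF min.cobounded2] cube_subset_dil[OF \<alpha> aC(2)] aD(2)
    by blast
  moreover have "min (\<alpha> * aC) aD > 0"
    using \<alpha> aC(1) aD(1) by simp
  ultimately have inner: "\<exists>a>0. cube d a \<subseteq> ?K"
    by blast
  obtain b where "polar d D \<subseteq> cube d b"
    using polar_bounded[OF D] .
  then have outer: "\<exists>b. ?K \<subseteq> cube d b"
    by blast
  have "vmeasurable d (dil \<alpha> (polar d C))"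
    unfolding dil_eq_homothety_image using \<alpha> polar_subset_Rsp
    by (intro vmeasurable_homothety_image vmeasurable_closed closed_polar) (auto simp: Rsp_def)
  then have "vmeasurable d ?K"
    using vmeasurable_closed[OF closed_polar] by (rule vmeasurable_Int)
  moreover have "vconvex ?K"
    by (intro vconvex_Int vconvex_dil vconvex_polar)
  moreover have "centrally_symmetric ?K"
    by (intro centrally_symmetric_Int centrally_symmetric_dil centrally_symmetric_polar C(2) D(2))
  ultimately show ?thesis
    using inner outer by (simp add: symmetric_solid_def)
qed

section \<open>Covering numbers\<close>

lemma covnum_le_card:
  assumes "finite X" "X \<subseteq> Rsp d" "U \<subseteq> (\<Union>x\<in>X. vadd x ` dil \<alpha> E)"
  shows "covnum d E U \<alpha> \<le> card X"
  unfolding covnum_def using assms by (intro Least_le exI[of _ X]) simp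

text \<open>The cover X only guarantees that the LEAST in covnum_def ranges over a nonempty set.\<close>

lemma covnum_refine:
  assumes cover: "finite X" "X \<subseteq> Rsp d" "U \<subseteq> (\<Union>x\<in>X. vadd x ` dil \<alpha> E)"
    and pieces: "\<And>x. \<exists>Y. finite Y \<and> Y \<subseteq> Rsp d \<and> real (card Y) \<le> m \<and>
                       U \<inter> vadd x ` dil \<alpha> E \<subseteq> (\<Union>y\<in>Y. vadd y ` dil \<alpha> F)"
  shows "real (covnum d F U \<alpha>) \<le> m * real (covnum d E U \<alpha>)"
proof -
  define covers where
    "covers k \<longleftrightarrow> (\<exists>X. finite X \<and> card X = k \<and> X \<subseteq> Rsp d \<and> U \<subseteq> (\<Union>x\<in>X. vadd x ` dil \<alpha> E))" for k
  have "covers (card X)"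
    unfolding covers_def using cover by (intro exI[of _ X]) simp
  then have "covers (covnum d E U \<alpha>)"
    unfolding covnum_def covers_def[symmetric] by (rule LeastI)
  then obtain X0 where X0: "finite X0" "card X0 = covnum d E U \<alpha>" "U \<subseteq> (\<Union>x\<in>X0. vadd x ` dil \<alpha> E)"
    unfolding covers_def by auto
  obtain Y where Y: "\<And>x. finite (Y x) \<and> Y x \<subseteq> Rsp d \<and> real (card (Y x)) \<le> m \<and>
      U \<inter> vadd x ` dil \<alpha> E \<subseteq> (\<Union>y\<in>Y x. vadd y ` dil \<alpha> F)"
    using pieces by metis
  then have Y_fin: "finite (\<Union>x\<in>X0. Y x)" and Y_Rsp: "(\<Union>x\<in>X0. Y x) \<subseteq> Rsp d"
    and Y_card: "\<And>x. real (card (Y x)) \<le> m"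
    and Y_cover: "\<And>x. U \<inter> vadd x ` dil \<alpha> E \<subseteq> (\<Union>y\<in>Y x. vadd y ` dil \<alpha> F)"
    using X0(1) by (simp_all add: UN_least)
  have "U \<subseteq> (\<Union>y\<in>(\<Union>x\<in>X0. Y x). vadd y ` dil \<alpha> F)"
  proof
    fix u assume u: "u \<in> U"
    then obtain x where "x \<in> X0" "u \<in> vadd x ` dil \<alpha> E"
      using X0(3) by blast
    moreover have "u \<in> (\<Union>y\<in>Y x. vadd y ` dil \<alpha> F)"
      using Y_cover[of x] u calculation(2) by blast
    ultimately show "u \<in> (\<Union>y\<in>(\<Union>x\<in>X0. Y x). vadd y ` dil \<alpha> F)"
      by blast
  qed
  then have "real (covnum d F U \<alpha>) \<le> real (card (\<Union>x\<in>X0. Y x))"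
    using Y_fin Y_Rsp by (intro of_nat_mono covnum_le_card)
  also have "\<dots> \<le> real (\<Sum>x\<in>X0. card (Y x))"
    by (intro of_nat_mono card_UN_le X0(1))
  also have "\<dots> \<le> (\<Sum>x\<in>X0. m)"
    unfolding of_nat_sum using Y_card by (rule sum_mono)
  also have "\<dots> = m * real (covnum d E U \<alpha>)"
    using X0(2) by simp
  finally show ?thesis .
qed

lemma covnum_polar_minksum_le:
  assumes C: "convex_body d C" "centrally_symmetric C"
    and D: "convex_body d D" "centrally_symmetric D"
    and \<alpha>: "\<alpha> > 0" and U: "U \<subseteq> polar d D"
  shows "real (covnum d (polar d (minksum C (dil \<alpha> D))) U \<alpha>) \<le> 9 ^ d * real (covnum d (polar d C) U \<alpha>)"
proof -
  define K where "K = dil \<alpha> (polar d C) \<inter> polar d D"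
  have K: "symmetric_solid d K"
    unfolding K_def using symmetric_solid_polar_section[OF C D \<alpha>] .
  then have L: "symmetric_solid d (dil (1/2) K)"
    by (simp add: symmetric_solid_dil)
  have LE: "dil (1/2) K \<subseteq> dil \<alpha> (polar d C)"
    using dil_half_subset[of K] K by (auto simp: symmetric_solid_def K_def)
  have LF: "dil (1/2) K \<subseteq> dil \<alpha> (polar d (minksum C (dil \<alpha> D)))"
    unfolding K_def by (rule half_polar_section_subset)
  obtain b where "polar d D \<subseteq> cube d b"
    using polar_bounded[OF D] .
  moreover obtain R where R: "R > 0" "cube d b \<subseteq> homothety (\<lambda>i. 0) R ` dil (1/2) K"
    using cube_subset_homothety_image[OF L] .
  ultimately have U_in: "U \<subseteq> homothety (\<lambda>i. 0) R ` dil (1/2) K"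
    using U by blast
  have zero: "(\<lambda>i. 0) \<in> Rsp d"
    by (simp add: Rsp_def)
  obtain X where X: "finite X" "X \<subseteq> U" "real (card X) \<le> (2 * R + 1) ^ d"
    "U \<subseteq> (\<Union>x\<in>X. vadd x ` dil (1/2) K)"
    using cover_by_translates[OF L R(1) zero U_in] .
  have "\<exists>Y. finite Y \<and> Y \<subseteq> Rsp d \<and> real (card Y) \<le> 9 ^ d \<and>
      U \<inter> vadd x ` dil \<alpha> (polar d C) \<subseteq> (\<Union>y\<in>Y. vadd y ` dil \<alpha> (polar d (minksum C (dil \<alpha> D))))" for x
  proof -
    have E_convex: "vconvex (dil \<alpha> (polar d C))" "centrally_symmetric (dil \<alpha> (polar d C))"
      using C(2) by (intro vconvex_dil vconvex_polar centrally_symmetric_dil centrally_symmetric_polar)+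
    obtain Y where "finite Y" "Y \<subseteq> Rsp d" "real (card Y) \<le> 9 ^ d"
      "polar d D \<inter> vadd x ` dil \<alpha> (polar d C) \<subseteq> (\<Union>y\<in>Y. vadd y ` dil (1/2) K)"
      unfolding K_def
      using cover_symmetric_piece[OF E_convex vconvex_polar centrally_symmetric_polar[OF D(2)] L[unfolded K_def]
          polar_subset_Rsp] .
    then show ?thesis
      using U LF by (intro exI[of _ Y]) blast
  qed
  moreover have "U \<subseteq> (\<Union>x\<in>X. vadd x ` dil \<alpha> (polar d C))"
    using X(4) LE by blast
  moreover have "X \<subseteq> Rsp d"
    using X(2) U polar_subset_Rsp by blast
  ultimately show ?thesis
    using X(1) by (intro covnum_refine[of X])
qed

theorem lemma4p3:
  shows "\<exists>c::real. c \<ge> 1 \<and>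
    (\<forall>d::nat. \<forall>C D U. \<forall>\<alpha>::real.
       convex_body d C \<longrightarrow> centrally_symmetric C \<longrightarrow>
       convex_body d D \<longrightarrow> centrally_symmetric D \<longrightarrow>
       \<alpha> > 0 \<longrightarrow> U \<subseteq> polar d D \<longrightarrow>
       real (covnum d (polar d (minksum C (dil \<alpha> D))) U \<alpha>)
         \<le> c ^ d * real (covnum d (polar d C) U \<alpha>))"
proof (intro exI[of _ 9] conjI allI impI)
  fix d C D U and \<alpha> :: real
  assume "convex_body d C" "centrally_symmetric C" "convex_body d D" "centrally_symmetric D"
    "\<alpha> > 0" "U \<subseteq> polar d D"
  then show "real (covnum d (polar d (minksum C (dil \<alpha> D))) U \<alpha>) \<le> 9 ^ d * real (covnum d (polar d C) U \<alpha>)"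
    by (rule covnum_polar_minksum_le)
qed simp

end
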